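(* Consider the TeeRollup protocol described in the context, and let $st_h$ be the latest state recorded by the TeeRollup smart contract (TSC) on the main chain. If a malicious sequencer forges an invalid current state $st_h' \neq st_h$ and supplies it to its enclave, then the new state $st_{h+1}'$ generated by the enclave from $st_h'$ will not be accepted by the TSC.
   Context: TeeRollup is a rollup protocol on a main chain with finality and smart contracts. There are $n$ sequencers $p_1,\dots,p_n$, each equipped with a TEE enclave $\eta_i$ holding a key pair $(pk_i,sk_i)$ whose public keys are registered on-chain; at most $f$ of these TEEs are compromised (for a compromised TEE the adversary knows $sk_i$ and can sign arbitrary messages), and the remaining TEEs are uncompromised. Malicious sequencers fully control the inputs and outputs of their enclaves (they may choose inputs, delay, drop or replay messages). Rollup states form a chain: a state at height $h$ is $st_h = \langle h, H(st_{h-1}), R_h, H(txs_h)\rangle$, where $H$ is a secure (collision-resistant) hash function, $R_h$ is the Merkle root of the account tree (addresses and balances) and $txs_h$ is the batch of transactions executed to produce $st_h$; the state transition is $st_{h+1} \leftarrow execute(st_h, txs_{h+1})$. An uncompromised enclave, given an input state $s$ and a batch $txs$, runs the fixed protocol program: it outputs the state $execute(s,txs)$, whose previous-hash field is $H(s)$, and signs (with $sk_i$) only states produced this way. A quorum certificate (QC) for a state is a set of valid signatures on its hash from at least $f+1$ distinct registered sequencers. The TSC records the latest accepted state $st_h$ and accepts a submitted state $S$ only if $S$ has height $h+1$, the previous-hash field of $S$ equals $H(st_h)$, and $S$ comes with a valid QC. *)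

theory Defs
  imports Main
begin

text \<open>Rollup state st_h = <h, H(st_(h-1)), R_h, H(txs_h)>.\<close>
record ('h, 'r) rstate =
  height :: nat
  prevh  :: 'h
  root   :: 'r
  txsh   :: 'h

definition valid_QC ::
  "('i \<Rightarrow> 'pk) \<Rightarrow> ('pk \<Rightarrow> 'h \<Rightarrow> 'sig \<Rightarrow> bool) \<Rightarrow> nat \<Rightarrow> 'i set \<Rightarrow> 'h \<Rightarrow> ('i \<times> 'sig) set \<Rightarrow> bool"
  where
  "valid_QC pk verify f Seqs d qc \<longleftrightarrow>
     (\<exists>S. S \<subseteq> Seqs \<and> finite S \<and> f + 1 \<le> card S \<and>
          (\<forall>i\<in>S. \<exists>\<sigma>. (i, \<sigma>) \<in> qc \<and> verify (pk i) d \<sigma>))"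

definition tsc_accepts ::
  "(('h, 'r) rstate \<Rightarrow> 'h) \<Rightarrow> ('i \<Rightarrow> 'pk) \<Rightarrow> ('pk \<Rightarrow> 'h \<Rightarrow> 'sig \<Rightarrow> bool) \<Rightarrow> nat \<Rightarrow> 'i set
    \<Rightarrow> ('h, 'r) rstate \<Rightarrow> ('h, 'r) rstate \<Rightarrow> ('i \<times> 'sig) set \<Rightarrow> bool"
  where
  "tsc_accepts H pk verify f Seqs st S qc \<longleftrightarrow>
     height S = Suc (height st) \<and> prevh S = H st \<and> valid_QC pk verify f Seqs (H S) qc"

end

theory Submission
  imports Defs
begin

lemma tsc_accepts_prevh: "tsc_accepts H pk verify f Seqs st S qc \<Longrightarrow> prevh S = H st"
  by (simp add: tsc_accepts_def)

lemma tsc_rejects_other_parent: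
  assumes "inj H" and "prevh S = H s" and "s \<noteq> st"
  shows "\<not> tsc_accepts H pk verify f Seqs st S qc"
proof
  assume "tsc_accepts H pk verify f Seqs st S qc"
  then have "H s = H st"
    using \<open>prevh S = H s\<close> by (simp add: tsc_accepts_prevh)
  with \<open>inj H\<close> \<open>s \<noteq> st\<close> show False
    by (simp add: inj_eq)
qed

theorem lemma1:
  fixes H :: "('h, 'r) rstate \<Rightarrow> 'h"
    and execute :: "('h, 'r) rstate \<Rightarrow> 'tx \<Rightarrow> ('h, 'r) rstate"
    and pk :: "'i \<Rightarrow> 'pk" and verify :: "'pk \<Rightarrow> 'h \<Rightarrow> 'sig \<Rightarrow> bool"
    and f :: nat and Seqs :: "'i set"
    and st st' :: "('h, 'r) rstate" and txs :: 'tx and qc :: "('i \<times> 'sig) set"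
  assumes collision_resistant: "inj H"
    and exec_shape: "\<And>s t. height (execute s t) = Suc (height s) \<and> prevh (execute s t) = H s"
    and forged: "st' \<noteq> st"
  shows "\<not> tsc_accepts H pk verify f Seqs st (execute st' txs) qc"
proof (rule tsc_rejects_other_parent)
  show "inj H" by (fact collision_resistant)
  show "prevh (execute st' txs) = H st'" using exec_shape by blast
  show "st' \<noteq> st" by (fact forged)
qed

end
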